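(* For every $m>0$ there exist $C(m)\ge0$ and $\tau_0\ge0$ such that for all $\tau\ge\tau_0$, $$\big|\tau^{-2}e^{\tau m/2}F_1(m,\tau)-1\big|\le C(m)\,\tau\, e^{-\tau m/2}.$$ In particular $\tau^{-2}e^{\tau m/2}F_1(m,\tau)\to1$ as $\tau\to+\infty$.
   Context: $F_1(m,\tau)=\lambda_1\big((-m/2,m/2),\tau e_r\big)$, the principal Dirichlet eigenvalue on the interval $(-m/2,m/2)$ of the operator $u\mapsto -u''+\tau\,\mathrm{sgn}(x)\,u'$ (here $e_r(x)=x/|x|=\mathrm{sgn}(x)$). *)

theory Defs
  imports "HOL-Analysis.Analysis"
begin

text \<open>Principal Dirichlet eigenvalue on the interval (-m/2, m/2) of the operator
  u \<mapsto> -u'' + tau sgn(x) u'.  lambda is the principal eigenvalue iff there is an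
  eigenfunction that is positive inside the interval, vanishes at both endpoints,
  is continuous on the closed interval, C^1-differentiable inside, twice
  differentiable away from the discontinuity point 0 of the drift, and satisfies
  -u'' + tau sgn(x) u' = lambda u there (strong W^{2,infinity} sense).\<close>

definition is_principal_eigenpair ::
  "real \<Rightarrow> real \<Rightarrow> real \<Rightarrow> (real \<Rightarrow> real) \<Rightarrow> bool" where
  "is_principal_eigenpair m \<tau> lam u \<longleftrightarrow>
     continuous_on {-m/2..m/2} u \<and> u (-m/2) = 0 \<and> u (m/2) = 0 \<and>
     (\<exists>u'. (\<forall>x\<in>{-m/2<..<m/2}. u x > 0 \<and> (u has_real_derivative u' x) (at x)) \<and>
           (\<forall>x\<in>{-m/2<..<m/2} - {0}. \<exists>u''. (u' has_real_derivative u'') (at x) \<and>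
                 - u'' + \<tau> * sgn x * u' x = lam * u x))"

definition F1 :: "real \<Rightarrow> real \<Rightarrow> real" where
  "F1 m \<tau> = (THE lam. \<exists>u. is_principal_eigenpair m \<tau> lam u)"

end

theory Submission
  imports Defs "HOL-Real_Asymp.Real_Asymp"
begin

(* On each half of the interval the equation reads -u'' +- tau u' = lambda u. Writing
   lambda = delta (tau - delta), the even function
     u x = (tau - delta) exp (delta |x|) - delta exp ((tau - delta) |x|)
   solves it on both sides with u'(0) = 0, and it vanishes at +-m/2 exactly when
   delta (exp ((tau - 2 delta) m/2) + 1) = tau. For tau m >= 8 this equation has a root
   delta in (0, tau/4], for which u is positive, so delta (tau - delta) is a principal
   eigenvalue.

   Principal eigenvalues are unique: if l1 < l2, the weighted Wronskian
   exp (-tau |x|) (u1' u2 - u2' u1) has derivative (l2 - l1) exp (-tau |x|) u1 u2 > 0 away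
   from 0 and is continuous at 0, yet it tends to 0 at both endpoints because eigenfunctions
   have bounded derivatives.

   Hence F1 m tau = delta (tau - delta). The root equation gives exp (delta m) <= e^4 and
   delta <= e^4 tau exp (-tau m/2), so that
   exp (tau m/2) F1 m tau / tau^2 = (1 - delta/tau)^2 exp (delta m) = 1 + O(tau exp (-tau m/2)). *)

section \<open>Derivatives of even and odd extensions\<close>

lemma eventually_sgn_eq_nhds:
  fixes x :: real
  assumes "x \<noteq> 0"
  shows "eventually (\<lambda>y. sgn y = sgn x) (nhds x)"
proof (cases "x > 0")
  case True
  then show ?thesis
    using eventually_nhds_in_open[of "{0<..}" x] by (auto elim!: eventually_mono)
next
  case False
  with assms show ?thesis
    using eventually_nhds_in_open[of "{..<0}" x] by (auto elim!: eventually_mono)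
qed

lemma has_real_derivative_sgn:
  fixes x :: real
  assumes "x \<noteq> 0"
  shows "(sgn has_real_derivative 0) (at x)"
  using DERIV_cong_ev[OF refl eventually_sgn_eq_nhds[OF assms] refl] by simp

lemma has_real_derivative_abs:
  fixes x :: real
  assumes "x \<noteq> 0"
  shows "(abs has_real_derivative sgn x) (at x)"
proof -
  have "eventually (\<lambda>y. \<bar>y\<bar> = y * sgn x) (nhds x)"
    using eventually_sgn_eq_nhds[OF assms] by (rule eventually_mono) (simp add: abs_sgn)
  then have "(abs has_real_derivative sgn x) (at x) \<longleftrightarrow>
             ((\<lambda>y. y * sgn x) has_real_derivative sgn x) (at x)"
    by (rule DERIV_cong_ev[OF refl _ refl])
  then show ?thesis
    by (auto intro!: derivative_eq_intros)
qed

lemma has_real_derivative_even_extension: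
  fixes V V' :: "real \<Rightarrow> real"
  assumes "(V has_real_derivative V' \<bar>x\<bar>) (at \<bar>x\<bar>)" and "V' 0 = 0"
  shows "((\<lambda>x. V \<bar>x\<bar>) has_real_derivative sgn x * V' \<bar>x\<bar>) (at x)"
proof (cases "x = 0")
  case True
  have "((\<lambda>h. (V h - V 0) / h) \<longlongrightarrow> 0) (at 0)"
    using assms True by (simp add: has_field_derivative_iff)
  moreover have "filterlim abs (at 0) (at (0::real))"
    unfolding filterlim_at by (auto simp: eventually_at_filter intro!: tendsto_eq_intros)
  ultimately have "((\<lambda>h. (V \<bar>h\<bar> - V 0) / \<bar>h\<bar>) \<longlongrightarrow> 0) (at 0)"
    by (rule filterlim_compose)
  then have "((\<lambda>h. \<bar>(V \<bar>h\<bar> - V 0) / \<bar>h\<bar>\<bar>) \<longlongrightarrow> 0) (at 0)"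
    by (rule tendsto_rabs_zero)
  then have "((\<lambda>h. \<bar>(V \<bar>h\<bar> - V 0) / h\<bar>) \<longlongrightarrow> 0) (at 0)"
    by simp
  then show ?thesis
    unfolding True has_field_derivative_iff by (simp add: tendsto_rabs_zero_cancel)
next
  case False
  show ?thesis
    using DERIV_chain2[OF assms(1) has_real_derivative_abs[OF False]] by (simp add: mult.commute)
qed

lemma has_real_derivative_odd_extension:
  fixes V' V'' :: "real \<Rightarrow> real"
  assumes "(V' has_real_derivative V'' \<bar>x\<bar>) (at \<bar>x\<bar>)" and "x \<noteq> 0"
  shows "((\<lambda>x. sgn x * V' \<bar>x\<bar>) has_real_derivative V'' \<bar>x\<bar>) (at x)"
proof (rule DERIV_cong)
  show "((\<lambda>x. sgn x * V' \<bar>x\<bar>) has_real_derivative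
          0 * V' \<bar>x\<bar> + sgn x * (V'' \<bar>x\<bar> * sgn x)) (at x)"
    using DERIV_mult[OF has_real_derivative_sgn DERIV_chain2[OF assms(1) has_real_derivative_abs]]
      assms(2) by (simp add: ac_simps)
  show "0 * V' \<bar>x\<bar> + sgn x * (V'' \<bar>x\<bar> * sgn x) = V'' \<bar>x\<bar>"
    using assms(2) by (simp add: sgn_if)
qed

section \<open>Bounds from the mean value theorem\<close>

lemma MVT_open_segment:
  fixes f f' :: "real \<Rightarrow> real"
  assumes "a \<noteq> b" and "\<And>z. z \<in> closed_segment a b \<Longrightarrow> (f has_real_derivative f' z) (at z)"
  shows "\<exists>z\<in>open_segment a b. f b - f a = (b - a) * f' z"
proof (cases "a < b")
  case True
  then show ?thesis
    using MVT2[of a b f f'] assms(2) by (auto simp: closed_segment_eq_real_ivl open_segment_eq_real_ivl)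
next
  case False
  then have "b < a" using assms(1) by simp
  then obtain z where "b < z" "z < a" "f a - f b = (a - b) * f' z"
    using MVT2[of b a f f'] assms(2) by (auto simp: closed_segment_eq_real_ivl)
  then show ?thesis
    using \<open>b < a\<close> by (auto simp: open_segment_eq_real_ivl algebra_simps intro!: bexI[of _ z])
qed

(* By the mean value theorem, every difference quotient of f at c is a value of f'
   on the segment. *)
lemma derivative_endpoint_bound:
  fixes f f' :: "real \<Rightarrow> real"
  assumes "x \<noteq> c" and "(f has_real_derivative f' c) (at c)"
    and "\<And>y. y \<in> open_segment c x \<Longrightarrow> (f has_real_derivative f' y) (at y)"
    and "\<And>y. y \<in> open_segment c x \<Longrightarrow> \<bar>f' y - f' x\<bar> \<le> K"
  shows "\<bar>f' c - f' x\<bar> \<le> K"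
proof -
  let ?F = "at c within open_segment c x"
  have "((\<lambda>h. (f h - f c) / (h - c)) \<longlongrightarrow> f' c) ?F"
    using assms(2) by (auto simp: has_field_derivative_iff intro: tendsto_within_subset)
  then have lim: "((\<lambda>h. \<bar>(f h - f c) / (h - c) - f' x\<bar>) \<longlongrightarrow> \<bar>f' c - f' x\<bar>) ?F"
    by (intro tendsto_intros)
  have "\<bar>(f h - f c) / (h - c) - f' x\<bar> \<le> K" if h: "h \<in> open_segment c x" for h
  proof -
    have "h \<noteq> c" using h by (auto simp: open_segment_eq_real_ivl split: if_splits)
    moreover have "closed_segment c h \<subseteq> insert c (open_segment c x)"
      using h by (auto simp: closed_segment_eq_real_ivl open_segment_eq_real_ivl split: if_splits)
    ultimately obtain z where z: "z \<in> open_segment c h" "f h - f c = (h - c) * f' z"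
      using MVT_open_segment[of c h f f'] assms(2,3) by blast
    have "open_segment c h \<subseteq> open_segment c x"
      using h by (auto simp: open_segment_eq_real_ivl split: if_splits)
    with z \<open>h \<noteq> c\<close> show ?thesis
      using assms(4) by auto
  qed
  then have "eventually (\<lambda>h. \<bar>(f h - f c) / (h - c) - f' x\<bar> \<le> K) ?F"
    by (auto simp: eventually_at_filter)
  moreover have "\<not> trivial_limit ?F"
    using assms(1) islimpt_greaterThanLessThan1[of c x] islimpt_greaterThanLessThan2[of x c]
    by (auto simp: trivial_limit_within open_segment_eq_real_ivl)
  ultimately show ?thesis
    using tendsto_upperbound[OF lim] by blast
qed

lemma isCont_derivative_if_second_derivative_bounded:
  fixes f f' f'' :: "real \<Rightarrow> real"
  assumes "open S" and "c \<in> S"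
    and "\<And>y. y \<in> S \<Longrightarrow> (f has_real_derivative f' y) (at y)"
    and "\<And>y. y \<in> S - {c} \<Longrightarrow> (f' has_real_derivative f'' y) (at y)"
    and "\<And>y. y \<in> S - {c} \<Longrightarrow> \<bar>f'' y\<bar> \<le> L"
  shows "isCont f' c"
proof -
  obtain r where "r > 0" and r: "ball c r \<subseteq> S"
    using assms(1,2) open_contains_ball by blast
  have near: "\<bar>f' x - f' c\<bar> \<le> L * \<bar>x - c\<bar>" if x: "x \<in> ball c r" "x \<noteq> c" for x
  proof -
    have seg: "closed_segment c x \<subseteq> S"
      using closed_segment_subset[OF centre_in_ball[THEN iffD2, OF \<open>r > 0\<close>] x(1) convex_ball] r
      by blast
    have bound: "\<bar>f' y - f' x\<bar> \<le> L * \<bar>x - c\<bar>" if y: "y \<in> open_segment c x" for y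
    proof -
      have sub: "closed_segment y x \<subseteq> S - {c}"
        using seg y x(2) by (auto simp: closed_segment_eq_real_ivl open_segment_eq_real_ivl split: if_splits)
      have "norm (f' y - f' x) \<le> L * norm (y - x)"
        using sub assms(4,5)
        by (intro field_differentiable_bound[OF convex_closed_segment, where f' = f''])
          (auto intro: has_field_derivative_at_within)
      also have "\<dots> \<le> L * \<bar>x - c\<bar>"
      proof (rule mult_left_mono)
        show "L \<ge> 0"
          using assms(5)[of y] sub by (meson abs_ge_zero ends_in_segment(1) order_trans subsetD)
        show "norm (y - x) \<le> \<bar>x - c\<bar>"
          using y by (auto simp: open_segment_eq_real_ivl split: if_splits)
      qed
      finally show ?thesis by simp
    qed
    have "\<bar>f' c - f' x\<bar> \<le> L * \<bar>x - c\<bar>"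
      by (rule derivative_endpoint_bound[OF x(2) assms(3)[OF assms(2)] _ bound])
        (use assms(3) seg segment_open_subset_closed[of c x] in auto)
    then show ?thesis by (simp add: abs_minus_commute)
  qed
  have "((\<lambda>x. f' x - f' c) \<longlongrightarrow> 0) (at c)"
  proof (rule Lim_null_comparison)
    show "eventually (\<lambda>x. norm (f' x - f' c) \<le> L * \<bar>x - c\<bar>) (at c)"
      unfolding eventually_at using \<open>r > 0\<close> near by (auto simp: dist_commute)
    show "((\<lambda>x. L * \<bar>x - c\<bar>) \<longlongrightarrow> 0) (at c)"
      by (auto intro!: tendsto_eq_intros)
  qed
  then show ?thesis
    by (simp add: isCont_def LIM_zero_iff)
qed

lemma bounded_image_if_derivative_bounded:
  fixes g g' :: "'a::real_normed_field \<Rightarrow> 'a"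
  assumes "convex S" and "bounded S"
    and "\<And>z. z \<in> S \<Longrightarrow> (g has_field_derivative g' z) (at z)"
    and "\<And>z. z \<in> S \<Longrightarrow> norm (g' z) \<le> L"
  shows "bounded (g ` S)"
proof (cases "S = {}")
  case False
  then obtain s where s: "s \<in> S" by blast
  obtain B where B: "\<And>z. z \<in> S \<Longrightarrow> norm z \<le> B"
    using assms(2) by (auto simp: bounded_iff)
  have "L \<ge> 0" using assms(4)[OF s] norm_ge_zero order_trans by blast
  show ?thesis
  proof (rule boundedI)
    fix w assume "w \<in> g ` S"
    then obtain z where z: "z \<in> S" "w = g z" by blast
    have "norm (g z - g s) \<le> L * norm (z - s)"
      using assms z s by (intro field_differentiable_bound) (auto intro: has_field_derivative_at_within)
    also have "\<dots> \<le> L * (2 * B)"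
      using B[OF z(1)] B[OF s] norm_triangle_ineq4[of z s] \<open>L \<ge> 0\<close> by (intro mult_left_mono) auto
    finally show "norm w \<le> norm (g s) + L * (2 * B)"
      using z norm_triangle_ineq2[of "g z" "g s"] by simp
  qed
qed simp

section \<open>Regularity of principal eigenfunctions\<close>

lemma exp_mult_abs_le:
  fixes t x a :: real
  assumes "\<bar>x\<bar> \<le> a"
  shows "exp (t * \<bar>x\<bar>) \<le> exp (\<bar>t\<bar> * a)"
proof -
  have "t * \<bar>x\<bar> \<le> \<bar>t\<bar> * \<bar>x\<bar>" by (simp add: mult_right_mono)
  also have "\<dots> \<le> \<bar>t\<bar> * a" using assms by (simp add: mult_left_mono)
  finally show ?thesis by simp
qed

lemma has_real_derivative_exp_mult_abs:
  fixes x t :: real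
  assumes "x \<noteq> 0"
  shows "((\<lambda>y. exp (t * \<bar>y\<bar>)) has_real_derivative t * sgn x * exp (t * \<bar>x\<bar>)) (at x)"
  using DERIV_chain2[OF DERIV_exp DERIV_cmult[OF has_real_derivative_abs[OF assms], of t]]
  by (simp add: mult.commute)

lemma principal_eigenpairE:
  assumes "is_principal_eigenpair m \<tau> l u"
  obtains u' where "continuous_on {-m/2..m/2} u" "u (-m/2) = 0" "u (m/2) = 0"
    "\<And>x. x \<in> {-m/2<..<m/2} \<Longrightarrow> u x > 0"
    "\<And>x. x \<in> {-m/2<..<m/2} \<Longrightarrow> (u has_real_derivative u' x) (at x)"
    "\<And>x. x \<in> {-m/2<..<m/2} - {0} \<Longrightarrow>
       (u' has_real_derivative \<tau> * sgn x * u' x - l * u x) (at x)"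
proof -
  obtain u' where u':
    "\<And>x. x \<in> {-m/2<..<m/2} \<Longrightarrow> u x > 0 \<and> (u has_real_derivative u' x) (at x)"
    "\<And>x. x \<in> {-m/2<..<m/2} - {0} \<Longrightarrow> \<exists>u''. (u' has_real_derivative u'') (at x) \<and>
       - u'' + \<tau> * sgn x * u' x = l * u x"
    using assms unfolding is_principal_eigenpair_def by blast
  have "(u' has_real_derivative \<tau> * sgn x * u' x - l * u x) (at x)"
    if x: "x \<in> {-m/2<..<m/2} - {0}" for x
  proof -
    obtain u'' where "(u' has_real_derivative u'') (at x)" "- u'' + \<tau> * sgn x * u' x = l * u x"
      using u'(2)[OF x] by blast
    moreover from this(2) have "u'' = \<tau> * sgn x * u' x - l * u x" by linarith
    ultimately show ?thesis by simp
  qed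
  with u'(1) assms show ?thesis
    using that unfolding is_principal_eigenpair_def by blast
qed

lemma eigenfunction_derivative_bounded:
  fixes u u' :: "real \<Rightarrow> real"
  assumes "\<And>x. x \<in> {-m/2<..<m/2} \<Longrightarrow> \<bar>u x\<bar> \<le> M"
    and "\<And>x. x \<in> {-m/2<..<m/2} - {0} \<Longrightarrow>
           (u' has_real_derivative \<tau> * sgn x * u' x - l * u x) (at x)"
  obtains B where "\<And>x. x \<in> {-m/2<..<m/2} - {0} \<Longrightarrow> \<bar>u' x\<bar> \<le> B"
proof -
  \<comment> \<open>\<open>exp (- \<tau> * \<bar>x\<bar>)\<close> is an integrating factor: the drift term cancels in \<open>g'\<close>.\<close>
  define g where "g x = exp (- \<tau> * \<bar>x\<bar>) * u' x" for x
  have dg: "(g has_real_derivative - l * exp (- \<tau> * \<bar>x\<bar>) * u x) (at x)"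
    if "x \<in> {-m/2<..<m/2} - {0}" for x
  proof -
    have "(g has_real_derivative - \<tau> * sgn x * exp (- \<tau> * \<bar>x\<bar>) * u' x
            + (\<tau> * sgn x * u' x - l * u x) * exp (- \<tau> * \<bar>x\<bar>)) (at x)"
      unfolding g_def using that
      by (intro DERIV_mult[OF has_real_derivative_exp_mult_abs assms(2)]) auto
    then show ?thesis by (simp add: algebra_simps)
  qed
  have bounded_half: "bounded (g ` S)" if S: "S \<subseteq> {-m/2<..<m/2} - {0}" "convex S" "bounded S" for S
  proof (rule bounded_image_if_derivative_bounded[OF S(2,3)])
    fix z assume "z \<in> S"
    then have z: "z \<in> {-m/2<..<m/2} - {0}" using S(1) by blast
    show "(g has_field_derivative - l * exp (- \<tau> * \<bar>z\<bar>) * u z) (at z)"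
      by (rule dg[OF z])
    have "\<bar>l * exp (- \<tau> * \<bar>z\<bar>) * u z\<bar> \<le> \<bar>l\<bar> * exp (\<bar>\<tau>\<bar> * (m/2)) * M"
      unfolding abs_mult using z assms(1)[of z] exp_mult_abs_le[of z "m/2" "- \<tau>"]
      by (intro mult_mono) auto
    then show "norm (- l * exp (- \<tau> * \<bar>z\<bar>) * u z) \<le> \<bar>l\<bar> * exp (\<bar>\<tau>\<bar> * (m/2)) * M"
      by simp
  qed
  have "bounded (g ` ({-m/2<..<0} \<union> {0<..<m/2}))"
    unfolding image_Un bounded_Un by (intro conjI bounded_half) auto
  then obtain G where G: "\<And>x. x \<in> {-m/2<..<0} \<union> {0<..<m/2} \<Longrightarrow> \<bar>g x\<bar> \<le> G"
    unfolding bounded_iff by (metis image_eqI real_norm_def)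
  show ?thesis
  proof (rule that)
    fix x assume x: "x \<in> {-m/2<..<m/2} - {0}"
    then have "\<bar>g x\<bar> \<le> G" using G[of x] by (cases "x < 0") auto
    have "u' x = g x * exp (\<tau> * \<bar>x\<bar>)"
      by (simp add: g_def exp_minus field_simps)
    also have "\<bar>\<dots>\<bar> \<le> G * exp (\<bar>\<tau>\<bar> * (m/2))"
      unfolding abs_mult using x \<open>\<bar>g x\<bar> \<le> G\<close> exp_mult_abs_le[of x "m/2" \<tau>]
      by (intro mult_mono) auto
    finally show "\<bar>u' x\<bar> \<le> G * exp (\<bar>\<tau>\<bar> * (m/2))" .
  qed
qed

lemma principal_eigenpair_regularity:
  assumes "m > 0" and "is_principal_eigenpair m \<tau> l u"
  obtains u' B where "continuous_on {-m/2..m/2} u" "u (-m/2) = 0" "u (m/2) = 0"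
    "\<And>x. x \<in> {-m/2<..<m/2} \<Longrightarrow> u x > 0"
    "\<And>x. x \<in> {-m/2<..<m/2} \<Longrightarrow> (u has_real_derivative u' x) (at x)"
    "\<And>x. x \<in> {-m/2<..<m/2} - {0} \<Longrightarrow>
       (u' has_real_derivative \<tau> * sgn x * u' x - l * u x) (at x)"
    "\<And>x. x \<in> {-m/2<..<m/2} - {0} \<Longrightarrow> \<bar>u' x\<bar> \<le> B"
    "isCont u' 0"
proof -
  obtain u' where u: "continuous_on {-m/2..m/2} u" "u (-m/2) = 0" "u (m/2) = 0"
    "\<And>x. x \<in> {-m/2<..<m/2} \<Longrightarrow> u x > 0"
    "\<And>x. x \<in> {-m/2<..<m/2} \<Longrightarrow> (u has_real_derivative u' x) (at x)"
    and du': "\<And>x. x \<in> {-m/2<..<m/2} - {0} \<Longrightarrow>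
       (u' has_real_derivative \<tau> * sgn x * u' x - l * u x) (at x)"
    using principal_eigenpairE[OF assms(2)] by blast
  obtain M where M: "\<And>x. x \<in> {-m/2..m/2} \<Longrightarrow> \<bar>u x\<bar> \<le> M"
    using compact_imp_bounded[OF compact_continuous_image[OF u(1) compact_Icc]]
    unfolding bounded_iff by (metis image_eqI real_norm_def)
  obtain B where B: "\<And>x. x \<in> {-m/2<..<m/2} - {0} \<Longrightarrow> \<bar>u' x\<bar> \<le> B"
    by (rule eigenfunction_derivative_bounded[of m u M u' \<tau> l]) (use M du' in auto)
  have "isCont u' 0"
  proof (rule isCont_derivative_if_second_derivative_bounded[OF _ _ u(5) du'])
    show "0 \<in> {-m/2<..<m/2}" using assms(1) by simp
    fix x assume x: "x \<in> {-m/2<..<m/2} - {0}"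
    have "\<bar>\<tau> * sgn x * u' x\<bar> \<le> \<bar>\<tau>\<bar> * B"
      using B[OF x] x by (simp add: abs_mult abs_sgn_eq_1 mult_left_mono)
    moreover have "\<bar>l * u x\<bar> \<le> \<bar>l\<bar> * M"
      using M[of x] x by (simp add: abs_mult mult_left_mono)
    ultimately show "\<bar>\<tau> * sgn x * u' x - l * u x\<bar> \<le> \<bar>\<tau>\<bar> * B + \<bar>l\<bar> * M"
      by linarith
  qed simp
  with u du' B show ?thesis
    using that by blast
qed

section \<open>Uniqueness of the principal eigenvalue\<close>

lemma DERIV_pos_imp_increasing_off_point:
  fixes W :: "real \<Rightarrow> real"
  assumes "s < t" and "continuous_on {s..t} W"
    and "\<And>x. s < x \<Longrightarrow> x < t \<Longrightarrow> x \<noteq> c \<Longrightarrow> \<exists>y. (W has_real_derivative y) (at x) \<and> y > 0"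
  shows "W s < W t"
proof (cases "s < c \<and> c < t")
  case True
  have "W s < W c"
  proof (rule DERIV_pos_imp_increasing_open[of s c W])
    show "continuous_on {s..c} W"
      using True by (intro continuous_on_subset[OF assms(2)]) auto
  qed (use True assms(3) in auto)
  also have "W c < W t"
  proof (rule DERIV_pos_imp_increasing_open[of c t W])
    show "continuous_on {c..t} W"
      using True by (intro continuous_on_subset[OF assms(2)]) auto
  qed (use True assms(3) in auto)
  finally show ?thesis .
next
  case False
  show ?thesis
  proof (rule DERIV_pos_imp_increasing_open[OF assms(1) _ assms(2)])
    fix x assume "s < x" "x < t"
    with False have "x \<noteq> c" by auto
    with \<open>s < x\<close> \<open>x < t\<close> show "\<exists>y. (W has_real_derivative y) (at x) \<and> y > 0"
      by (rule assms(3))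
  qed
qed

lemma increasing_limits_less:
  fixes W :: "real \<Rightarrow> real"
  assumes "p < q" and mono: "\<And>s t. p < s \<Longrightarrow> s < t \<Longrightarrow> t < q \<Longrightarrow> W s < W t"
    and "(W \<longlongrightarrow> A) (at_right p)" and "(W \<longlongrightarrow> B) (at_left q)"
  shows "A < B"
proof -
  define s t where "s = (2*p + q) / 3" and "t = (p + 2*q) / 3"
  have st: "p < s" "s < t" "t < q"
    using assms(1) by (auto simp: s_def t_def)
  have "A \<le> W s"
  proof (rule tendsto_upperbound[OF assms(3)])
    show "eventually (\<lambda>y. W y \<le> W s) (at_right p)"
      using eventually_at_right_real[OF st(1)]
      by (rule eventually_mono) (use st mono in \<open>auto intro: less_imp_le\<close>)
  qed simp
  also have "W s < W t" using st by (rule mono)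
  also have "W t \<le> B"
  proof (rule tendsto_lowerbound[OF assms(4)])
    show "eventually (\<lambda>y. W t \<le> W y) (at_left q)"
      using eventually_at_left_real[OF st(3)]
      by (rule eventually_mono) (use st mono in \<open>auto intro: less_imp_le\<close>)
  qed simp
  finally show ?thesis .
qed

definition weighted_wronskian ::
  "real \<Rightarrow> (real \<Rightarrow> real) \<Rightarrow> (real \<Rightarrow> real) \<Rightarrow> (real \<Rightarrow> real) \<Rightarrow> (real \<Rightarrow> real) \<Rightarrow> real \<Rightarrow> real"
  where "weighted_wronskian \<tau> u1 u1' u2 u2' y = exp (- \<tau> * \<bar>y\<bar>) * (u1' y * u2 y - u2' y * u1 y)"

lemma has_real_derivative_weighted_wronskian:
  assumes "x \<noteq> 0"
    and "(u1 has_real_derivative u1' x) (at x)" and "(u2 has_real_derivative u2' x) (at x)"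
    and "(u1' has_real_derivative \<tau> * sgn x * u1' x - l1 * u1 x) (at x)"
    and "(u2' has_real_derivative \<tau> * sgn x * u2' x - l2 * u2 x) (at x)"
  shows "(weighted_wronskian \<tau> u1 u1' u2 u2' has_real_derivative
           (l2 - l1) * exp (- \<tau> * \<bar>x\<bar>) * u1 x * u2 x) (at x)"
  unfolding weighted_wronskian_def[abs_def]
  by (rule DERIV_cong[OF DERIV_mult[OF has_real_derivative_exp_mult_abs[OF assms(1)]
        DERIV_diff[OF DERIV_mult[OF assms(4,3)] DERIV_mult[OF assms(5,2)]]]])
    (simp add: algebra_simps)

lemma weighted_wronskian_tendsto_0:
  assumes "eventually (\<lambda>y. \<bar>y\<bar> \<le> a \<and> \<bar>u1' y\<bar> \<le> B1 \<and> \<bar>u2' y\<bar> \<le> B2) F"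
    and "(u1 \<longlongrightarrow> 0) F" and "(u2 \<longlongrightarrow> 0) F"
  shows "(weighted_wronskian \<tau> u1 u1' u2 u2' \<longlongrightarrow> 0) F"
proof (rule Lim_null_comparison)
  let ?E = "exp (\<bar>\<tau>\<bar> * a)"
  show "eventually (\<lambda>y. norm (weighted_wronskian \<tau> u1 u1' u2 u2' y)
          \<le> ?E * (B1 * \<bar>u2 y\<bar> + B2 * \<bar>u1 y\<bar>)) F"
    using assms(1)
  proof (rule eventually_mono)
    fix y assume y: "\<bar>y\<bar> \<le> a \<and> \<bar>u1' y\<bar> \<le> B1 \<and> \<bar>u2' y\<bar> \<le> B2"
    have "\<bar>u1' y * u2 y - u2' y * u1 y\<bar> \<le> \<bar>u1' y\<bar> * \<bar>u2 y\<bar> + \<bar>u2' y\<bar> * \<bar>u1 y\<bar>"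
      using abs_triangle_ineq4 by (metis abs_mult)
    also have "\<dots> \<le> B1 * \<bar>u2 y\<bar> + B2 * \<bar>u1 y\<bar>"
      using y by (intro add_mono mult_right_mono) auto
    finally show "norm (weighted_wronskian \<tau> u1 u1' u2 u2' y) \<le> ?E * (B1 * \<bar>u2 y\<bar> + B2 * \<bar>u1 y\<bar>)"
      unfolding weighted_wronskian_def real_norm_def abs_mult using y exp_mult_abs_le[of y a "- \<tau>"]
      by (intro mult_mono) auto
  qed
  have "((\<lambda>y. ?E * (B1 * \<bar>u2 y\<bar> + B2 * \<bar>u1 y\<bar>)) \<longlongrightarrow> ?E * (B1 * \<bar>0\<bar> + B2 * \<bar>0\<bar>)) F"
    by (intro tendsto_intros assms(2,3))
  then show "((\<lambda>y. ?E * (B1 * \<bar>u2 y\<bar> + B2 * \<bar>u1 y\<bar>)) \<longlongrightarrow> 0) F"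
    by simp
qed

lemma principal_eigenvalue_not_less:
  assumes "m > 0"
    and "is_principal_eigenpair m \<tau> l1 u1" and "is_principal_eigenpair m \<tau> l2 u2"
  shows "\<not> l1 < l2"
proof
  assume "l1 < l2"
  obtain u1' B1 where c1: "continuous_on {-m/2..m/2} u1" and z1: "u1 (-m/2) = 0" "u1 (m/2) = 0"
    and p1: "\<And>x. x \<in> {-m/2<..<m/2} \<Longrightarrow> u1 x > 0"
    and d1: "\<And>x. x \<in> {-m/2<..<m/2} \<Longrightarrow> (u1 has_real_derivative u1' x) (at x)"
    and dd1: "\<And>x. x \<in> {-m/2<..<m/2} - {0} \<Longrightarrow>
      (u1' has_real_derivative \<tau> * sgn x * u1' x - l1 * u1 x) (at x)"
    and b1: "\<And>x. x \<in> {-m/2<..<m/2} - {0} \<Longrightarrow> \<bar>u1' x\<bar> \<le> B1"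
    and i1: "isCont u1' 0"
    using principal_eigenpair_regularity[OF assms(1,2)] by blast
  obtain u2' B2 where c2: "continuous_on {-m/2..m/2} u2" and z2: "u2 (-m/2) = 0" "u2 (m/2) = 0"
    and p2: "\<And>x. x \<in> {-m/2<..<m/2} \<Longrightarrow> u2 x > 0"
    and d2: "\<And>x. x \<in> {-m/2<..<m/2} \<Longrightarrow> (u2 has_real_derivative u2' x) (at x)"
    and dd2: "\<And>x. x \<in> {-m/2<..<m/2} - {0} \<Longrightarrow>
      (u2' has_real_derivative \<tau> * sgn x * u2' x - l2 * u2 x) (at x)"
    and b2: "\<And>x. x \<in> {-m/2<..<m/2} - {0} \<Longrightarrow> \<bar>u2' x\<bar> \<le> B2"
    and i2: "isCont u2' 0"
    using principal_eigenpair_regularity[OF assms(1,3)] by blast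
  define W where "W = weighted_wronskian \<tau> u1 u1' u2 u2'"
  have dW: "(W has_real_derivative (l2 - l1) * exp (- \<tau> * \<bar>x\<bar>) * u1 x * u2 x) (at x)"
    if x: "x \<in> {-m/2<..<m/2} - {0}" for x
    unfolding W_def using x by (intro has_real_derivative_weighted_wronskian d1 d2 dd1 dd2) auto
  have W_cont: "isCont W x" if "x \<in> {-m/2<..<m/2}" for x
  proof (cases "x = 0")
    case True
    have "isCont u1 0" "isCont u2 0"
      using d1[of 0] d2[of 0] assms(1) by (auto intro: DERIV_isCont)
    then show ?thesis
      unfolding W_def weighted_wronskian_def[abs_def] True by (intro continuous_intros i1 i2)
  next
    case False
    with that show ?thesis by (intro DERIV_isCont[OF dW]) simp
  qed
  have mono: "W s < W t" if st: "-m/2 < s" "s < t" "t < m/2" for s t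
  proof (rule DERIV_pos_imp_increasing_off_point[of s t W 0])
    show "continuous_on {s..t} W"
      using st by (intro continuous_at_imp_continuous_on ballI W_cont) auto
    fix x assume "s < x" "x < t" "x \<noteq> 0"
    with st have x: "x \<in> {-m/2<..<m/2} - {0}" by simp
    have "(l2 - l1) * exp (- \<tau> * \<bar>x\<bar>) * u1 x * u2 x > 0"
      using \<open>l1 < l2\<close> p1[of x] p2[of x] x by simp
    with dW[OF x] show "\<exists>y. (W has_real_derivative y) (at x) \<and> y > 0" by blast
  qed (use st in simp)
  have W_tendsto_0: "(W \<longlongrightarrow> 0) F"
    if "eventually (\<lambda>y. y \<in> {-m/2<..<m/2} - {0}) F" and "(u1 \<longlongrightarrow> 0) F" and "(u2 \<longlongrightarrow> 0) F"
    for F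
  proof -
    have "eventually (\<lambda>y. \<bar>y\<bar> \<le> m/2 \<and> \<bar>u1' y\<bar> \<le> B1 \<and> \<bar>u2' y\<bar> \<le> B2) F"
      using that(1) by (rule eventually_mono) (use b1 b2 in auto)
    then show ?thesis
      unfolding W_def using that(2,3) by (rule weighted_wronskian_tendsto_0)
  qed
  have "(W \<longlongrightarrow> 0) (at_right (-m/2))"
    using assms(1) continuous_on_Icc_at_rightD[OF c1] continuous_on_Icc_at_rightD[OF c2] z1 z2
    by (intro W_tendsto_0 eventually_mono[OF eventually_at_right_real[of "-m/2" 0]]) auto
  moreover have "(W \<longlongrightarrow> 0) (at_left (m/2))"
    using assms(1) continuous_on_Icc_at_leftD[OF c1] continuous_on_Icc_at_leftD[OF c2] z1 z2
    by (intro W_tendsto_0 eventually_mono[OF eventually_at_left_real[of 0 "m/2"]]) auto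
  ultimately show False
    using increasing_limits_less[of "-m/2" "m/2" W 0 0] mono assms(1) by auto
qed

lemma principal_eigenvalue_unique:
  assumes "m > 0"
    and "is_principal_eigenpair m \<tau> l1 u1" and "is_principal_eigenpair m \<tau> l2 u2"
  shows "l1 = l2"
  using principal_eigenvalue_not_less[OF assms] principal_eigenvalue_not_less[OF assms(1,3,2)]
  by linarith

lemma F1_eqI:
  assumes "m > 0" and "is_principal_eigenpair m \<tau> l u"
  shows "F1 m \<tau> = l"
  unfolding F1_def using assms principal_eigenvalue_unique by blast

section \<open>The explicit principal eigenpair and its asymptotics\<close>

lemma is_principal_eigenpair_explicit:
  fixes m \<tau> \<delta> :: real
  assumes "m > 0" and "0 < \<delta>" and "2 * \<delta> < \<tau>"
    and root: "\<delta> * (exp ((\<tau> - 2 * \<delta>) * (m/2)) + 1) = \<tau>"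
  shows "is_principal_eigenpair m \<tau> (\<delta> * (\<tau> - \<delta>))
           (\<lambda>x. (\<tau> - \<delta>) * exp (\<delta> * \<bar>x\<bar>) - \<delta> * exp ((\<tau> - \<delta>) * \<bar>x\<bar>))"
proof -
  define V where "V y = (\<tau> - \<delta>) * exp (\<delta> * y) - \<delta> * exp ((\<tau> - \<delta>) * y)" for y
  define V' where "V' y = \<delta> * (\<tau> - \<delta>) * (exp (\<delta> * y) - exp ((\<tau> - \<delta>) * y))" for y
  define V'' where "V'' y = \<delta> * (\<tau> - \<delta>) * (\<delta> * exp (\<delta> * y) - (\<tau> - \<delta>) * exp ((\<tau> - \<delta>) * y))" for y
  have dV: "(V has_real_derivative V' y) (at y)" for y
    unfolding V_def V'_def by (auto intro!: derivative_eq_intros simp: algebra_simps)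
  have dV': "(V' has_real_derivative V'' y) (at y)" for y
    unfolding V'_def V''_def by (auto intro!: derivative_eq_intros simp: algebra_simps)
  have ode: "- V'' y + \<tau> * V' y = \<delta> * (\<tau> - \<delta>) * V y" for y
    unfolding V_def V'_def V''_def by (simp add: algebra_simps)
  define E where "E = exp ((\<tau> - 2 * \<delta>) * (m/2))"
  have V_factor: "V y = \<delta> * exp (\<delta> * y) * (E - exp ((\<tau> - 2 * \<delta>) * y))" for y
  proof -
    have "\<tau> - \<delta> = \<delta> * E" using root by (simp add: E_def algebra_simps)
    moreover have "exp ((\<tau> - \<delta>) * y) = exp ((\<tau> - 2 * \<delta>) * y) * exp (\<delta> * y)"
      by (simp add: exp_add[symmetric] algebra_simps)
    ultimately show ?thesis by (simp add: V_def algebra_simps)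
  qed
  have V_pos: "V \<bar>x\<bar> > 0" if "x \<in> {-m/2<..<m/2}" for x
  proof -
    have "(\<tau> - 2 * \<delta>) * \<bar>x\<bar> < (\<tau> - 2 * \<delta>) * (m/2)"
      using that assms(3) by (intro mult_strict_left_mono) auto
    then show ?thesis using assms(2) by (simp add: V_factor E_def)
  qed
  have "is_principal_eigenpair m \<tau> (\<delta> * (\<tau> - \<delta>)) (\<lambda>x. V \<bar>x\<bar>)"
    unfolding is_principal_eigenpair_def
  proof (intro conjI exI[of _ "\<lambda>x. sgn x * V' \<bar>x\<bar>"] ballI)
    show "continuous_on {-m/2..m/2} (\<lambda>x. V \<bar>x\<bar>)"
      unfolding V_def by (intro continuous_intros)
    show "V \<bar>-m/2\<bar> = 0" "V \<bar>m/2\<bar> = 0"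
      using assms(1) by (simp_all add: V_factor E_def)
    fix x assume x: "x \<in> {-m/2<..<m/2}"
    show "V \<bar>x\<bar> > 0" by (rule V_pos[OF x])
    show "((\<lambda>x. V \<bar>x\<bar>) has_real_derivative sgn x * V' \<bar>x\<bar>) (at x)"
      by (rule has_real_derivative_even_extension[where V' = V', OF dV]) (simp add: V'_def)
  next
    fix x assume x: "x \<in> {-m/2<..<m/2} - {0}"
    then have "sgn x * sgn x = 1" by (simp add: sgn_if)
    then have "- V'' \<bar>x\<bar> + \<tau> * sgn x * (sgn x * V' \<bar>x\<bar>) = \<delta> * (\<tau> - \<delta>) * V \<bar>x\<bar>"
      using ode[of "\<bar>x\<bar>"] by (metis mult.assoc mult.commute mult_1)
    with x show "\<exists>u''. ((\<lambda>x. sgn x * V' \<bar>x\<bar>) has_real_derivative u'') (at x) \<and>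
        - u'' + \<tau> * sgn x * (sgn x * V' \<bar>x\<bar>) = \<delta> * (\<tau> - \<delta>) * V \<bar>x\<bar>"
      using has_real_derivative_odd_extension[where V'' = V'', OF dV'] by blast
  qed
  then show ?thesis by (simp add: V_def)
qed

lemma principal_root_exists:
  fixes m \<tau> :: real
  assumes "m > 0" and "\<tau> * m \<ge> 8"
  obtains \<delta> where "0 < \<delta>" "\<delta> \<le> \<tau> / 4" "\<delta> * (exp ((\<tau> - 2 * \<delta>) * (m/2)) + 1) = \<tau>"
proof -
  define h where "h d = d * (exp ((\<tau> - 2 * d) * (m/2)) + 1)" for d
  have "\<tau> * m > 0" using assms(2) by linarith
  then have "\<tau> > 0" using assms(1) by (simp add: zero_less_mult_iff)
  have "exp (\<tau> * m / 4) \<ge> 3"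
    using exp_ge_add_one_self[of "\<tau> * m / 4"] assms(2) by linarith
  then have "h 0 \<le> \<tau>" "\<tau> \<le> h (\<tau> / 4)"
    using \<open>\<tau> > 0\<close> by (simp_all add: h_def field_simps)
  moreover have "continuous_on {0..\<tau>/4} h"
    unfolding h_def by (intro continuous_intros)
  ultimately obtain d where "0 \<le> d" "d \<le> \<tau> / 4" "h d = \<tau>"
    using IVT'[of h 0 \<tau> "\<tau> / 4"] \<open>\<tau> > 0\<close> by auto
  moreover from this have "d \<noteq> 0" using \<open>\<tau> > 0\<close> by (auto simp: h_def)
  ultimately show ?thesis by (intro that[of d]) (auto simp: h_def)
qed

lemma root_exp_identity:
  fixes m \<tau> \<delta> :: real
  assumes root: "\<delta> * (exp ((\<tau> - 2 * \<delta>) * (m/2)) + 1) = \<tau>"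
  shows "\<delta> * exp (\<tau> * m / 2) = (\<tau> - \<delta>) * exp (\<delta> * m)"
proof -
  have "(\<tau> - 2 * \<delta>) * (m/2) + \<delta> * m = \<tau> * m / 2"
    by (simp add: algebra_simps)
  then have "exp (\<tau> * m / 2) = exp ((\<tau> - 2 * \<delta>) * (m/2)) * exp (\<delta> * m)"
    unfolding mult_exp_exp by simp
  moreover have "\<delta> * exp ((\<tau> - 2 * \<delta>) * (m/2)) = \<tau> - \<delta>"
    using root by (simp add: algebra_simps)
  ultimately show ?thesis by (simp add: mult.assoc[symmetric])
qed

lemma root_mult_le_4:
  fixes m \<tau> \<delta> :: real
  assumes "m > 0" and "\<tau> > 0" and "0 < \<delta>" and "\<delta> \<le> \<tau> / 4"
    and root: "\<delta> * (exp ((\<tau> - 2 * \<delta>) * (m/2)) + 1) = \<tau>"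
  shows "\<delta> * m \<le> 4"
proof -
  have "\<delta> * m \<le> \<tau> / 4 * m"
    using assms by (intro mult_right_mono) auto
  then have "\<tau> * m / 4 \<le> (\<tau> - 2 * \<delta>) * (m/2)"
    by (simp add: algebra_simps)
  then have "\<tau> * m / 4 \<le> exp ((\<tau> - 2 * \<delta>) * (m/2))"
    using exp_ge_add_one_self[of "(\<tau> - 2 * \<delta>) * (m/2)"] by linarith
  then have "\<delta> * (\<tau> * m / 4) \<le> \<delta> * exp ((\<tau> - 2 * \<delta>) * (m/2))"
    using \<open>\<delta> > 0\<close> by simp
  also have "\<dots> \<le> \<tau>"
    using root \<open>\<delta> > 0\<close> by (simp add: algebra_simps)
  finally have "(\<delta> * m) * \<tau> \<le> 4 * \<tau>"
    by (simp add: field_simps)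
  then show ?thesis
    using assms(2) mult_le_cancel_right_pos[of \<tau> "\<delta> * m" 4] by linarith
qed

lemma root_le_exp_bound:
  fixes m \<tau> \<delta> :: real
  assumes "m > 0" and "\<tau> > 0" and "0 < \<delta>" and "\<delta> \<le> \<tau> / 4"
    and root: "\<delta> * (exp ((\<tau> - 2 * \<delta>) * (m/2)) + 1) = \<tau>"
  shows "\<delta> \<le> exp 4 * \<tau> * exp (- \<tau> * m / 2)"
proof -
  have "exp (\<delta> * m) \<le> exp 4"
    using root_mult_le_4[OF assms] by simp
  then have "(\<tau> - \<delta>) * exp (\<delta> * m) \<le> \<tau> * exp 4"
    using assms by (intro mult_mono) auto
  then have "\<delta> * exp (\<tau> * m / 2) \<le> \<tau> * exp 4"
    unfolding root_exp_identity[OF root] .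
  then show ?thesis
    by (simp add: exp_minus field_simps)
qed

lemma rescaled_square_bound:
  fixes m \<tau> \<delta> :: real
  assumes "\<tau> \<ge> 1" and "0 < \<delta>" and "\<delta> \<le> \<tau>" and "m \<ge> 0" and "\<delta> * m \<le> 4"
  shows "\<bar>(\<tau> - \<delta>)\<^sup>2 * exp (\<delta> * m) / \<tau>\<^sup>2 - 1\<bar> \<le> (m * exp 4 + 2) * \<delta>"
proof -
  define Y where "Y = exp (\<delta> * m)"
  have "Y \<ge> 1" "Y \<le> exp 4"
    using assms by (simp_all add: Y_def)
  have "(\<tau> - \<delta>)\<^sup>2 * Y / \<tau>\<^sup>2 \<le> Y"
    using assms \<open>Y \<ge> 1\<close> by (simp add: field_simps power_mono mult_right_mono)
  moreover have "Y - 1 \<le> \<delta> * m * Y"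
    using exp_ge_add_one_self[of "- (\<delta> * m)"] \<open>Y \<ge> 1\<close>
    by (simp add: Y_def exp_minus field_simps)
  moreover have "\<delta> * m * Y \<le> m * exp 4 * \<delta>"
    using mult_left_mono[OF \<open>Y \<le> exp 4\<close>, of "\<delta> * m"] assms by (simp add: ac_simps)
  ultimately have upper: "(\<tau> - \<delta>)\<^sup>2 * Y / \<tau>\<^sup>2 - 1 \<le> m * exp 4 * \<delta>"
    by linarith
  have "(\<tau> - \<delta>)\<^sup>2 / \<tau>\<^sup>2 \<le> (\<tau> - \<delta>)\<^sup>2 * Y / \<tau>\<^sup>2"
    using mult_left_mono[OF \<open>Y \<ge> 1\<close>, of "(\<tau> - \<delta>)\<^sup>2"] by (simp add: divide_right_mono)
  moreover have "1 - 2 * \<delta> / \<tau> \<le> (\<tau> - \<delta>)\<^sup>2 / \<tau>\<^sup>2"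
    using assms by (simp add: field_simps power2_eq_square)
  moreover have "\<delta> / \<tau> \<le> \<delta>"
    using assms by (simp add: divide_le_eq mult_le_cancel_left1)
  ultimately have lower: "1 - (\<tau> - \<delta>)\<^sup>2 * Y / \<tau>\<^sup>2 \<le> 2 * \<delta>"
    by linarith
  have "0 \<le> m * exp 4 * \<delta>"
    using assms by simp
  with upper lower \<open>\<delta> > 0\<close> show ?thesis
    unfolding Y_def[symmetric] by (simp add: abs_le_iff algebra_simps)
qed

lemma scaled_root_eigenvalue_bound:
  fixes m \<tau> \<delta> :: real
  assumes "m > 0" and "\<tau> \<ge> 1" and "0 < \<delta>" and "\<delta> \<le> \<tau> / 4"
    and root: "\<delta> * (exp ((\<tau> - 2 * \<delta>) * (m/2)) + 1) = \<tau>"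
  shows "\<bar>exp (\<tau> * m / 2) * (\<delta> * (\<tau> - \<delta>)) / \<tau>\<^sup>2 - 1\<bar>
           \<le> (m * exp 8 + 2 * exp 4) * \<tau> * exp (- \<tau> * m / 2)"
proof -
  have "\<tau> > 0" using assms(2) by simp
  have "exp (\<tau> * m / 2) * (\<delta> * (\<tau> - \<delta>)) = (\<delta> * exp (\<tau> * m / 2)) * (\<tau> - \<delta>)"
    by (simp add: algebra_simps)
  also have "\<dots> = (\<tau> - \<delta>)\<^sup>2 * exp (\<delta> * m)"
    unfolding root_exp_identity[OF root] by (simp add: power2_eq_square)
  finally have "\<bar>exp (\<tau> * m / 2) * (\<delta> * (\<tau> - \<delta>)) / \<tau>\<^sup>2 - 1\<bar> \<le> (m * exp 4 + 2) * \<delta>"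
    using rescaled_square_bound[OF assms(2,3) _ _ root_mult_le_4[OF assms(1) \<open>\<tau> > 0\<close> assms(3-5)]]
      assms by simp
  also have "\<dots> \<le> (m * exp 4 + 2) * (exp 4 * \<tau> * exp (- \<tau> * m / 2))"
    using root_le_exp_bound[OF assms(1) \<open>\<tau> > 0\<close> assms(3-5)] assms(1)
    by (intro mult_left_mono) auto
  also have "\<dots> = (m * exp 8 + 2 * exp 4) * \<tau> * exp (- \<tau> * m / 2)"
    by (simp add: algebra_simps mult_exp_exp)
  finally show ?thesis .
qed

lemma F1_asymptotic_bound:
  fixes m \<tau> :: real
  assumes "m > 0" and "\<tau> \<ge> 1 + 8 / m"
  shows "\<bar>exp (\<tau> * m / 2) * F1 m \<tau> / \<tau>\<^sup>2 - 1\<bar>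
           \<le> (m * exp 8 + 2 * exp 4) * \<tau> * exp (- \<tau> * m / 2)"
proof -
  have "8 / m > 0" using assms(1) by simp
  then have "\<tau> \<ge> 1" using assms(2) by linarith
  have "\<tau> * m \<ge> (1 + 8 / m) * m" using assms by (intro mult_right_mono) auto
  also have "(1 + 8 / m) * m = m + 8" using assms(1) by (simp add: field_simps)
  finally have "\<tau> * m \<ge> 8" using assms(1) by simp
  then obtain \<delta> where \<delta>: "0 < \<delta>" "\<delta> \<le> \<tau> / 4"
    and root: "\<delta> * (exp ((\<tau> - 2 * \<delta>) * (m/2)) + 1) = \<tau>"
    using principal_root_exists[OF assms(1)] by blast
  have "F1 m \<tau> = \<delta> * (\<tau> - \<delta>)"
    by (rule F1_eqI[OF assms(1) is_principal_eigenpair_explicit[OF assms(1) \<delta>(1) _ root]])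
      (use \<delta> \<open>\<tau> \<ge> 1\<close> in auto)
  then show ?thesis
    using scaled_root_eigenvalue_bound[OF assms(1) \<open>\<tau> \<ge> 1\<close> \<delta> root] by simp
qed

theorem mainTheorem11:
  fixes m :: real
  assumes "m > 0"
  shows "(\<exists>C \<tau>0. C \<ge> 0 \<and> \<tau>0 \<ge> 0 \<and>
           (\<forall>\<tau>\<ge>\<tau>0. \<bar>exp (\<tau> * m / 2) * F1 m \<tau> / \<tau>\<^sup>2 - 1\<bar> \<le> C * \<tau> * exp (- \<tau> * m / 2))) \<and>
         (((\<lambda>\<tau>. exp (\<tau> * m / 2) * F1 m \<tau> / \<tau>\<^sup>2) \<longlongrightarrow> 1) at_top)"
proof
  define C where "C = m * exp 8 + 2 * exp 4"
  define \<tau>0 where "\<tau>0 = 1 + 8 / m"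
  have bound: "\<bar>exp (\<tau> * m / 2) * F1 m \<tau> / \<tau>\<^sup>2 - 1\<bar> \<le> C * \<tau> * exp (- \<tau> * m / 2)"
    if "\<tau> \<ge> \<tau>0" for \<tau>
    using F1_asymptotic_bound[OF assms] that by (simp add: C_def \<tau>0_def)
  show "\<exists>C \<tau>0. C \<ge> 0 \<and> \<tau>0 \<ge> 0 \<and>
          (\<forall>\<tau>\<ge>\<tau>0. \<bar>exp (\<tau> * m / 2) * F1 m \<tau> / \<tau>\<^sup>2 - 1\<bar> \<le> C * \<tau> * exp (- \<tau> * m / 2))"
    using assms bound by (intro exI[of _ C] exI[of _ \<tau>0] conjI allI impI) (simp_all add: C_def \<tau>0_def)
  have "((\<lambda>\<tau>. C * \<tau> * exp (- \<tau> * m / 2)) \<longlongrightarrow> 0) at_top"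
    using assms by real_asymp
  moreover have "eventually (\<lambda>\<tau>. norm (exp (\<tau> * m / 2) * F1 m \<tau> / \<tau>\<^sup>2 - 1)
                   \<le> C * \<tau> * exp (- \<tau> * m / 2)) at_top"
    using eventually_ge_at_top[of \<tau>0] by (rule eventually_mono) (unfold real_norm_def, rule bound)
  ultimately have "((\<lambda>\<tau>. exp (\<tau> * m / 2) * F1 m \<tau> / \<tau>\<^sup>2 - 1) \<longlongrightarrow> 0) at_top"
    by (rule Lim_null_comparison[rotated])
  then show "((\<lambda>\<tau>. exp (\<tau> * m / 2) * F1 m \<tau> / \<tau>\<^sup>2) \<longlongrightarrow> 1) at_top"
    by (simp add: LIM_zero_iff)
qed

end
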